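(* Let $S=K[x_1,\ldots,x_n]$ and let $I$ be a square-free monomial ideal of $S$ of degree $2$. Then $I$ is an $f$-ideal which is not of $l$ type for any $l$ if and only if the graph $T=\overline{\tau(G(I))}$ satisfies all of: (1) for each $i\in[n]$, $d(v_i)<n-1$ in $T$; (2) $\omega(T)=2$; (3) $|E(T)|=\frac12 C_n^2$; (4) $T$ is not bipartite.
   Context: $K$ is a field; $G(I)$ is the minimal monomial generating set; "of degree 2" means all elements of $G(I)$ have degree 2. With $\sigma$ the bijection $x_{i_1}\cdots x_{i_k}\mapsto\{i_1,\ldots,i_k\}$, the facet complex $\delta_{\mathcal{F}}(I)$ has facets $\sigma(g)$, $g\in G(I)$, the Stanley–Reisner complex is $\delta_{\mathcal{N}}(I)=\{\sigma(g)\mid g \text{ square-free monomial},\ g\notin I\}$, and $I$ is an $f$-ideal if both have the same $f$-vector. For a nonempty proper $B\subset[n]$ with complement $\overline B$, $W_B=\{x_ix_j\mid i\ne j,\ i,j\in B \text{ or } i,j\in\overline B\}$; $I$ is of $l$ type if $W_B\subseteq G(I)$ for some $B$ with $|B|=l$. $\tau(A)$, for a set $A$ of degree-2 square-free monomials, is the graph on $v_1,\ldots,v_n$ with edge $v_iv_j$ iff $x_ix_j\in A$; $\overline{\tau(A)}$ is its complement graph, $d(v)$ is vertex degree, $\omega$ is clique number, $E(T)$ is the edge set, $C_n^2$ the binomial coefficient. *)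

theory Defs
  imports Complex_Main
begin

text \<open>A square-free monomial x_{i_1}...x_{i_k} of S = K[x_1,...,x_n]
  is identified with its support sigma(g) = {i_1,...,i_k}, a subset of {1..n}.
  A square-free monomial ideal I of degree 2 is determined by its minimal generating set G(I),
  encoded as the set  Gs = sigma ` G(I)  of 2-element subsets of {1..n}.
  A square-free monomial g lies in I iff some generator divides g, i.e. some element of Gs
  is contained in sigma(g).  The field K plays no role.\<close>

definition sqfree_deg2_gens :: "nat \<Rightarrow> nat set set \<Rightarrow> bool" where
  "sqfree_deg2_gens n Gs \<longleftrightarrow> (\<forall>g\<in>Gs. g \<subseteq> {1..n} \<and> card g = 2)"

definition in_ideal :: "nat set set \<Rightarrow> nat set \<Rightarrow> bool" where
  "in_ideal Gs F \<longleftrightarrow> (\<exists>g\<in>Gs. g \<subseteq> F)"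

definition facet_complex :: "nat set set \<Rightarrow> nat set set" where
  "facet_complex Gs = {F. \<exists>g\<in>Gs. F \<subseteq> g}"

definition SR_complex :: "nat \<Rightarrow> nat set set \<Rightarrow> nat set set" where
  "SR_complex n Gs = {F. F \<subseteq> {1..n} \<and> \<not> in_ideal Gs F}"

text \<open>f-vector: f_i = number of faces of dimension i (i.e. of cardinality i+1).\<close>
definition f_vector :: "nat set set \<Rightarrow> nat \<Rightarrow> nat" where
  "f_vector D i = card {F \<in> D. card F = i + 1}"

definition f_ideal :: "nat \<Rightarrow> nat set set \<Rightarrow> bool" where
  "f_ideal n Gs \<longleftrightarrow> f_vector (facet_complex Gs) = f_vector (SR_complex n Gs)"

definition W_set :: "nat \<Rightarrow> nat set \<Rightarrow> nat set set" where
  "W_set n B = {{i, j} | i j. i \<noteq> j \<and>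
      ((i \<in> B \<and> j \<in> B) \<or> (i \<in> {1..n} - B \<and> j \<in> {1..n} - B))}"

definition of_l_type :: "nat \<Rightarrow> nat set set \<Rightarrow> nat \<Rightarrow> bool" where
  "of_l_type n Gs l \<longleftrightarrow>
     (\<exists>B. B \<noteq> {} \<and> B \<subset> {1..n} \<and> card B = l \<and> W_set n B \<subseteq> Gs)"

text \<open>Simple graphs on vertex set V, edges are 2-element subsets of V.
  tau(G(I)) has edge {i,j} iff x_i x_j in G(I); its complement graph T has vertex set {1..n}
  and edge set the 2-subsets of {1..n} not in Gs.\<close>
definition compl_tau_edges :: "nat \<Rightarrow> nat set set \<Rightarrow> nat set set" where
  "compl_tau_edges n Gs = {e. e \<subseteq> {1..n} \<and> card e = 2 \<and> e \<notin> Gs}"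

definition vdegree :: "nat set \<Rightarrow> nat set set \<Rightarrow> nat \<Rightarrow> nat" where
  "vdegree V E v = card {u \<in> V. {v, u} \<in> E}"

definition is_clique :: "nat set \<Rightarrow> nat set set \<Rightarrow> nat set \<Rightarrow> bool" where
  "is_clique V E C \<longleftrightarrow> C \<subseteq> V \<and> (\<forall>u\<in>C. \<forall>w\<in>C. u \<noteq> w \<longrightarrow> {u, w} \<in> E)"

definition clique_number :: "nat set \<Rightarrow> nat set set \<Rightarrow> nat" where
  "clique_number V E = Max (card ` {C. is_clique V E C})"

definition bipartite :: "nat set \<Rightarrow> nat set set \<Rightarrow> bool" where
  "bipartite V E \<longleftrightarrow> (\<exists>A B. A \<union> B = V \<and> A \<inter> B = {} \<and>
      (\<forall>e\<in>E. \<exists>a\<in>A. \<exists>b\<in>B. e = {a, b}))"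

end

theory Submission
  imports Defs
begin

text \<open>Both complexes of a degree-2 ideal are read off the graph T: the facet complex has
  f-vector (|\<Union>G(I)|, |G(I)|, 0, ...), while the faces of the Stanley--Reisner complex are exactly
  the cliques of T, so its f-vector is (n, |E(T)|, f_2, ...). Hence I is an f-ideal iff every
  vertex occurs in a generator (condition (1)), |G(I)| = |E(T)| (condition (3), as
  |G(I)| + |E(T)| = C(n,2)) and T has no triangle (with E(T) \<noteq> {}, condition (2)).
  Finally W_B \<subseteq> G(I) says precisely that every edge of T crosses the cut (B, [n] - B), so
  I is of some l type iff T is bipartite.\<close>

lemma f_vector_eq_0_iff: "f_vector D i = 0 \<longleftrightarrow> (\<forall>F\<in>D. card F \<noteq> i + 1)" if "finite D"
  using that by (simp add: f_vector_def Ball_def)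

lemma is_clique_doubleton:
  "u \<noteq> w \<Longrightarrow> is_clique V E {u, w} \<longleftrightarrow> u \<in> V \<and> w \<in> V \<and> {u, w} \<in> E"
  by (auto simp: is_clique_def insert_commute)

lemma vdegree_less_iff_non_neighbour:
  assumes "finite V" "v \<in> V" "\<forall>e\<in>E. card e = 2"
  shows "vdegree V E v < card V - 1 \<longleftrightarrow> (\<exists>u\<in>V. u \<noteq> v \<and> {v, u} \<notin> E)"
proof -
  have neighbours: "{u \<in> V. {v, u} \<in> E} \<subseteq> V - {v}"
    using assms(3) by fastforce
  have "card (V - {v}) = card V - 1"
    using assms(2) by simp
  then have "vdegree V E v < card V - 1 \<longleftrightarrow> {u \<in> V. {v, u} \<in> E} \<noteq> V - {v}"
    unfolding vdegree_def
    using neighbours assms(1) by (metis (no_types, lifting) card_seteq finite_Diff order_less_le card_mono)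
  also have "\<dots> \<longleftrightarrow> (\<exists>u\<in>V. u \<noteq> v \<and> {v, u} \<notin> E)"
    using neighbours by blast
  finally show ?thesis .
qed

lemma clique_number_eq_2_iff:
  assumes "finite V" "\<forall>e\<in>E. e \<subseteq> V \<and> card e = 2"
  shows "clique_number V E = 2 \<longleftrightarrow> E \<noteq> {} \<and> (\<forall>C. is_clique V E C \<longrightarrow> card C \<le> 2)"
proof -
  have "{C. is_clique V E C} \<subseteq> Pow V"
    by (auto simp: is_clique_def)
  then have finite: "finite (card ` {C. is_clique V E C})"
    using assms(1) by (meson finite_Pow_iff finite_imageI finite_subset)
  have "is_clique V E {}"
    by (simp add: is_clique_def)
  then have nonempty: "card ` {C. is_clique V E C} \<noteq> {}"
    by blast
  have "(\<exists>C. is_clique V E C \<and> card C = 2) \<longleftrightarrow> E \<noteq> {}"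
  proof
    assume "\<exists>C. is_clique V E C \<and> card C = 2"
    then obtain u w where "is_clique V E {u, w}" "u \<noteq> w"
      by (metis card_2_iff)
    then show "E \<noteq> {}"
      unfolding is_clique_def by (metis empty_iff insertI1 insertI2)
  next
    assume "E \<noteq> {}"
    then obtain e where "e \<in> E" by blast
    with assms(2) obtain u w where "e = {u, w}" "u \<noteq> w" "e \<subseteq> V"
      by (metis card_2_iff)
    with \<open>e \<in> E\<close> have "is_clique V E e \<and> card e = 2"
      by (auto simp: is_clique_def insert_commute)
    then show "\<exists>C. is_clique V E C \<and> card C = 2" ..
  qed
  then have "2 \<in> card ` {C. is_clique V E C} \<longleftrightarrow> E \<noteq> {}"
    by (metis (mono_tags, lifting) image_iff mem_Collect_eq)
  then show ?thesis
    unfolding clique_number_def using finite nonempty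
    by (simp add: Max_eq_iff)
qed

lemma bipartite_iff_cut: "bipartite V E \<longleftrightarrow> (\<exists>A\<subseteq>V. \<forall>e\<in>E. \<exists>a\<in>A. \<exists>b\<in>V - A. e = {a, b})"
proof
  assume "bipartite V E"
  then obtain A B where AB: "A \<union> B = V" "A \<inter> B = {}" and crossing: "\<forall>e\<in>E. \<exists>a\<in>A. \<exists>b\<in>B. e = {a, b}"
    unfolding bipartite_def by blast
  from AB have "A \<subseteq> V" "B = V - A" by auto
  with crossing show "\<exists>A\<subseteq>V. \<forall>e\<in>E. \<exists>a\<in>A. \<exists>b\<in>V - A. e = {a, b}"
    by auto
next
  assume "\<exists>A\<subseteq>V. \<forall>e\<in>E. \<exists>a\<in>A. \<exists>b\<in>V - A. e = {a, b}"
  then obtain A where "A \<subseteq> V" "\<forall>e\<in>E. \<exists>a\<in>A. \<exists>b\<in>V - A. e = {a, b}" by blast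
  then show "bipartite V E"
    unfolding bipartite_def by (intro exI[of _ A] exI[of _ "V - A"]) auto
qed

locale sqfree_deg2 =
  fixes n :: nat and Gs :: "nat set set"
  assumes gens: "sqfree_deg2_gens n Gs"
begin

abbreviation T :: "nat set set" where
  "T \<equiv> compl_tau_edges n Gs"

lemma generator_cases:
  assumes "g \<in> Gs"
  obtains a b where "g = {a, b}" "a \<noteq> b" "a \<in> {1..n}" "b \<in> {1..n}"
proof -
  from assms gens have "g \<subseteq> {1..n}" "card g = 2"
    by (auto simp: sqfree_deg2_gens_def)
  then show thesis
    using that by (metis card_2_iff insert_subset)
qed

lemma T_edge_cases:
  assumes "e \<in> T"
  obtains a b where "e = {a, b}" "a \<noteq> b" "a \<in> {1..n}" "b \<in> {1..n}" "e \<notin> Gs"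
  using assms that by (auto simp: compl_tau_edges_def card_2_iff)

lemma Union_generators_subset: "\<Union>Gs \<subseteq> {1..n}"
  using gens by (auto simp: sqfree_deg2_gens_def)

lemma finite_generators: "finite Gs"
proof (rule finite_subset)
  show "Gs \<subseteq> Pow {1..n}"
    using gens by (auto simp: sqfree_deg2_gens_def)
qed simp

lemma finite_T: "finite T"
proof (rule finite_subset)
  show "T \<subseteq> Pow {1..n}"
    by (auto simp: compl_tau_edges_def)
qed simp

lemma finite_SR_complex: "finite (SR_complex n Gs)"
proof (rule finite_subset)
  show "SR_complex n Gs \<subseteq> Pow {1..n}"
    by (auto simp: SR_complex_def)
qed simp

lemma card_generators_plus_card_T: "card Gs + card T = n choose 2"
proof -
  have "Gs \<union> T = {e. e \<subseteq> {1..n} \<and> card e = 2}"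
    using gens by (auto simp: sqfree_deg2_gens_def compl_tau_edges_def)
  moreover have "Gs \<inter> T = {}"
    by (auto simp: compl_tau_edges_def)
  ultimately show ?thesis
    using finite_generators finite_T by (simp add: card_Un_disjoint [symmetric] n_subsets)
qed

lemma is_clique_iff_SR_face: "is_clique {1..n} T C \<longleftrightarrow> C \<in> SR_complex n Gs"
proof
  assume clique: "is_clique {1..n} T C"
  have "\<not> in_ideal Gs C"
  proof
    assume "in_ideal Gs C"
    then obtain g where "g \<in> Gs" "g \<subseteq> C"
      by (auto simp: in_ideal_def)
    moreover from \<open>g \<in> Gs\<close> obtain a b where "g = {a, b}" "a \<noteq> b"
      by (rule generator_cases)
    ultimately have "g \<in> T \<inter> Gs"
      using clique by (auto simp: is_clique_def)
    then show False
      by (auto simp: compl_tau_edges_def)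
  qed
  with clique show "C \<in> SR_complex n Gs"
    by (simp add: SR_complex_def is_clique_def)
next
  assume "C \<in> SR_complex n Gs"
  then show "is_clique {1..n} T C"
    by (auto simp: SR_complex_def is_clique_def compl_tau_edges_def in_ideal_def)
qed

lemma f_vector_facet_complex_0: "f_vector (facet_complex Gs) 0 = card (\<Union>Gs)"
proof -
  have "{F \<in> facet_complex Gs. card F = 0 + 1} = (\<lambda>x. {x}) ` \<Union>Gs"
    by (auto simp: facet_complex_def card_Suc_eq)
  then show ?thesis
    unfolding f_vector_def by (simp add: card_image)
qed

lemma f_vector_facet_complex_1: "f_vector (facet_complex Gs) 1 = card Gs"
proof -
  have "F \<in> Gs" if "F \<subseteq> g" "g \<in> Gs" "card F = 2" for F g
    using that gens by (metis card_seteq finite.emptyI finite.insertI card_2_iff sqfree_deg2_gens_def order_refl)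
  then have "{F \<in> facet_complex Gs. card F = 1 + 1} = Gs"
    using gens by (auto simp: facet_complex_def sqfree_deg2_gens_def)
  then show ?thesis
    unfolding f_vector_def by simp
qed

lemma f_vector_facet_complex_ge_2: "f_vector (facet_complex Gs) i = 0" if "2 \<le> i"
proof -
  have "card F \<le> 2" if "F \<in> facet_complex Gs" for F
  proof -
    from that obtain g where "F \<subseteq> g" "g \<in> Gs"
      by (auto simp: facet_complex_def)
    then obtain a b where "F \<subseteq> {a, b}"
      by (metis generator_cases)
    then have "card F \<le> card {a, b}"
      by (simp add: card_mono)
    also have "\<dots> \<le> 2"
      by (simp add: card_insert_if)
    finally show ?thesis .
  qed
  with \<open>2 \<le> i\<close> have "{F \<in> facet_complex Gs. card F = i + 1} = {}"
    by fastforce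
  then show ?thesis
    unfolding f_vector_def by (simp only: card.empty)
qed

lemma f_vector_SR_complex_0: "f_vector (SR_complex n Gs) 0 = n"
proof -
  have "{C \<in> SR_complex n Gs. card C = 0 + 1} = (\<lambda>x. {x}) ` {1..n}"
    by (auto simp: is_clique_iff_SR_face [symmetric] is_clique_def card_Suc_eq)
  then show ?thesis
    unfolding f_vector_def by (simp add: card_image)
qed

lemma f_vector_SR_complex_1: "f_vector (SR_complex n Gs) 1 = card T"
proof -
  have "C \<in> SR_complex n Gs \<and> card C = 2 \<longleftrightarrow> C \<in> T" for C
  proof -
    have "C \<in> SR_complex n Gs \<and> card C = 2 \<longleftrightarrow>
        (\<exists>u w. C = {u, w} \<and> u \<noteq> w \<and> is_clique {1..n} T {u, w})"
      by (auto simp: is_clique_iff_SR_face [symmetric] card_2_iff)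
    also have "\<dots> \<longleftrightarrow> C \<in> T"
    proof
      assume "\<exists>u w. C = {u, w} \<and> u \<noteq> w \<and> is_clique {1..n} T {u, w}"
      then show "C \<in> T"
        using is_clique_doubleton by blast
    next
      assume "C \<in> T"
      then obtain u w where "C = {u, w}" "u \<noteq> w" "u \<in> {1..n}" "w \<in> {1..n}"
        by (rule T_edge_cases)
      with \<open>C \<in> T\<close> show "\<exists>u w. C = {u, w} \<and> u \<noteq> w \<and> is_clique {1..n} T {u, w}"
        using is_clique_doubleton by blast
    qed
    finally show ?thesis .
  qed
  then have "{C \<in> SR_complex n Gs. card C = 2} = T"
    by blast
  then show ?thesis
    unfolding f_vector_def one_add_one by (rule arg_cong)
qed

lemma f_ideal_iff:
  "f_ideal n Gs \<longleftrightarrow> \<Union>Gs = {1..n} \<and> card Gs = card T \<and> (\<forall>C\<in>SR_complex n Gs. card C \<le> 2)"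
proof -
  have split_index: "(\<forall>i. P i) \<longleftrightarrow> P 0 \<and> P 1 \<and> (\<forall>i\<ge>2. P i)" for P :: "nat \<Rightarrow> bool"
    by (metis One_nat_def less_2_cases not_le)
  have covering: "card (\<Union>Gs) = n \<longleftrightarrow> \<Union>Gs = {1..n}"
    using Union_generators_subset
    by (metis card_atLeastAtMost card_subset_eq diff_Suc_1 finite_atLeastAtMost)
  have small_faces: "(\<forall>i\<ge>2. f_vector (SR_complex n Gs) i = 0) \<longleftrightarrow> (\<forall>C\<in>SR_complex n Gs. card C \<le> 2)"
  proof
    assume no_large: "\<forall>i\<ge>2. f_vector (SR_complex n Gs) i = 0"
    show "\<forall>C\<in>SR_complex n Gs. card C \<le> 2"
    proof (rule ballI, rule ccontr)
      fix C assume "C \<in> SR_complex n Gs" "\<not> card C \<le> 2"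
      then have "f_vector (SR_complex n Gs) (card C - 1) \<noteq> 0"
        using finite_SR_complex by (simp add: f_vector_eq_0_iff) (metis Suc_pred' less_Suc_eq_0_disj not_le)
      with no_large \<open>\<not> card C \<le> 2\<close> show False
        by simp
    qed
  next
    assume "\<forall>C\<in>SR_complex n Gs. card C \<le> 2"
    then show "\<forall>i\<ge>2. f_vector (SR_complex n Gs) i = 0"
      using finite_SR_complex by (simp add: f_vector_eq_0_iff) force
  qed
  have "f_ideal n Gs \<longleftrightarrow> (\<forall>i. f_vector (facet_complex Gs) i = f_vector (SR_complex n Gs) i)"
    unfolding f_ideal_def fun_eq_iff ..
  also have "\<dots> \<longleftrightarrow> card (\<Union>Gs) = n \<and> card Gs = card T \<and> (\<forall>i\<ge>2. f_vector (SR_complex n Gs) i = 0)"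
    unfolding split_index [of "\<lambda>i. f_vector (facet_complex Gs) i = f_vector (SR_complex n Gs) i"]
    by (simp add: f_vector_facet_complex_0 f_vector_facet_complex_1 f_vector_facet_complex_ge_2
        f_vector_SR_complex_0 f_vector_SR_complex_1 eq_commute [of 0] flip: One_nat_def)
  finally show ?thesis
    unfolding covering small_faces .
qed

lemma vdegree_T_less_iff_covered:
  assumes "i \<in> {1..n}"
  shows "vdegree {1..n} T i < n - 1 \<longleftrightarrow> i \<in> \<Union>Gs"
proof -
  have "vdegree {1..n} T i < n - 1 \<longleftrightarrow> (\<exists>u\<in>{1..n}. u \<noteq> i \<and> {i, u} \<notin> T)"
    using vdegree_less_iff_non_neighbour[of "{1..n}" i T] assms
    by (simp add: compl_tau_edges_def)
  also have "\<dots> \<longleftrightarrow> (\<exists>u\<in>{1..n}. u \<noteq> i \<and> {i, u} \<in> Gs)"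
    using assms by (auto simp: compl_tau_edges_def)
  also have "\<dots> \<longleftrightarrow> i \<in> \<Union>Gs"
  proof
    assume "i \<in> \<Union>Gs"
    then obtain g where "g \<in> Gs" "i \<in> g"
      by blast
    moreover from \<open>g \<in> Gs\<close> obtain a b where "g = {a, b}" "a \<noteq> b" "a \<in> {1..n}" "b \<in> {1..n}"
      by (rule generator_cases)
    ultimately show "\<exists>u\<in>{1..n}. u \<noteq> i \<and> {i, u} \<in> Gs"
      by (metis insert_commute insertE singletonD)
  qed blast
  finally show ?thesis .
qed

lemma clique_number_T_eq_2_iff:
  "clique_number {1..n} T = 2 \<longleftrightarrow> T \<noteq> {} \<and> (\<forall>C\<in>SR_complex n Gs. card C \<le> 2)"
proof -
  have "\<forall>e\<in>T. e \<subseteq> {1..n} \<and> card e = 2"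
    by (simp add: compl_tau_edges_def)
  then have "clique_number {1..n} T = 2 \<longleftrightarrow> T \<noteq> {} \<and> (\<forall>C. is_clique {1..n} T C \<longrightarrow> card C \<le> 2)"
    by (intro clique_number_eq_2_iff) simp_all
  then show ?thesis
    unfolding is_clique_iff_SR_face by blast
qed

lemma vdegrees_less_iff_covering: "(\<forall>i\<in>{1..n}. vdegree {1..n} T i < n - 1) \<longleftrightarrow> \<Union>Gs = {1..n}"
proof -
  have "(\<forall>i\<in>{1..n}. vdegree {1..n} T i < n - 1) \<longleftrightarrow> {1..n} \<subseteq> \<Union>Gs"
    unfolding subset_eq using vdegree_T_less_iff_covered by blast
  with Union_generators_subset show ?thesis
    by blast
qed

lemma card_T_half_iff: "real (card T) = 1 / 2 * real (n choose 2) \<longleftrightarrow> card Gs = card T"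
proof -
  have "real (card Gs) + real (card T) = real (n choose 2)"
    using card_generators_plus_card_T by (metis of_nat_add)
  then show ?thesis
    by linarith
qed

lemma W_set_subset_iff_crossing:
  assumes "B \<subseteq> {1..n}"
  shows "W_set n B \<subseteq> Gs \<longleftrightarrow> (\<forall>e\<in>T. \<exists>a\<in>B. \<exists>b\<in>{1..n} - B. e = {a, b})"
proof
  assume W: "W_set n B \<subseteq> Gs"
  show "\<forall>e\<in>T. \<exists>a\<in>B. \<exists>b\<in>{1..n} - B. e = {a, b}"
  proof
    fix e assume "e \<in> T"
    then obtain a b where ab: "e = {a, b}" "a \<noteq> b" "a \<in> {1..n}" "b \<in> {1..n}" "e \<notin> Gs"
      by (rule T_edge_cases)
    with W have "e \<notin> W_set n B"
      by blast
    with ab have "a \<in> B \<and> b \<notin> B \<or> a \<notin> B \<and> b \<in> B"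
      unfolding W_set_def by blast
    with ab show "\<exists>a\<in>B. \<exists>b\<in>{1..n} - B. e = {a, b}"
      by (metis Diff_iff insert_commute)
  qed
next
  assume crossing: "\<forall>e\<in>T. \<exists>a\<in>B. \<exists>b\<in>{1..n} - B. e = {a, b}"
  show "W_set n B \<subseteq> Gs"
  proof
    fix e assume "e \<in> W_set n B"
    then obtain i j where ij: "e = {i, j}" "i \<noteq> j" "i \<in> B \<and> j \<in> B \<or> i \<in> {1..n} - B \<and> j \<in> {1..n} - B"
      unfolding W_set_def by blast
    show "e \<in> Gs"
    proof (rule ccontr)
      assume "e \<notin> Gs"
      with ij assms have "e \<in> T"
        by (auto simp: compl_tau_edges_def)
      with crossing obtain a b where "a \<in> B" "b \<in> {1..n} - B" "e = {a, b}"
        by blast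
      with ij show False
        by (auto simp: doubleton_eq_iff)
    qed
  qed
qed

lemma ex_l_type_iff_bipartite:
  assumes "T \<noteq> {}"
  shows "(\<exists>l. of_l_type n Gs l) \<longleftrightarrow> bipartite {1..n} T"
proof -
  have "(\<exists>l. of_l_type n Gs l) \<longleftrightarrow> (\<exists>B. B \<noteq> {} \<and> B \<subset> {1..n} \<and> W_set n B \<subseteq> Gs)"
  proof
    assume "\<exists>B. B \<noteq> {} \<and> B \<subset> {1..n} \<and> W_set n B \<subseteq> Gs"
    then obtain B where "B \<noteq> {}" "B \<subset> {1..n}" "W_set n B \<subseteq> Gs"
      by blast
    then have "of_l_type n Gs (card B)"
      unfolding of_l_type_def by blast
    then show "\<exists>l. of_l_type n Gs l" ..
  next
    assume "\<exists>l. of_l_type n Gs l"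
    then show "\<exists>B. B \<noteq> {} \<and> B \<subset> {1..n} \<and> W_set n B \<subseteq> Gs"
      unfolding of_l_type_def by blast
  qed
  also have "\<dots> \<longleftrightarrow> (\<exists>B\<subseteq>{1..n}. \<forall>e\<in>T. \<exists>a\<in>B. \<exists>b\<in>{1..n} - B. e = {a, b})"
  proof
    assume "\<exists>B. B \<noteq> {} \<and> B \<subset> {1..n} \<and> W_set n B \<subseteq> Gs"
    then obtain B where "B \<subset> {1..n}" "W_set n B \<subseteq> Gs"
      by blast
    with W_set_subset_iff_crossing [of B]
    show "\<exists>B\<subseteq>{1..n}. \<forall>e\<in>T. \<exists>a\<in>B. \<exists>b\<in>{1..n} - B. e = {a, b}"
      by (meson psubset_imp_subset)
  next
    assume "\<exists>B\<subseteq>{1..n}. \<forall>e\<in>T. \<exists>a\<in>B. \<exists>b\<in>{1..n} - B. e = {a, b}"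
    then obtain B where B: "B \<subseteq> {1..n}" and crossing: "\<forall>e\<in>T. \<exists>a\<in>B. \<exists>b\<in>{1..n} - B. e = {a, b}"
      by blast
    from assms obtain e where "e \<in> T"
      by blast
    with crossing obtain a b where "a \<in> B" "b \<in> {1..n} - B"
      by blast
    with B have "B \<noteq> {}" "B \<subset> {1..n}"
      by auto
    moreover have "W_set n B \<subseteq> Gs"
      using W_set_subset_iff_crossing [OF B] crossing ..
    ultimately show "\<exists>B. B \<noteq> {} \<and> B \<subset> {1..n} \<and> W_set n B \<subseteq> Gs"
      by blast
  qed
  also have "\<dots> \<longleftrightarrow> bipartite {1..n} T"
    by (rule bipartite_iff_cut [symmetric])
  finally show ?thesis .
qed

end

theorem lemma4p5:
  fixes n :: nat and Gs :: "nat set set"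
  assumes "sqfree_deg2_gens n Gs" and "Gs \<noteq> {}"
  shows "(f_ideal n Gs \<and> (\<forall>l. \<not> of_l_type n Gs l)) \<longleftrightarrow>
     ((\<forall>i\<in>{1..n}. vdegree {1..n} (compl_tau_edges n Gs) i < n - 1)
      \<and> clique_number {1..n} (compl_tau_edges n Gs) = 2
      \<and> real (card (compl_tau_edges n Gs)) = (1/2) * real (n choose 2)
      \<and> \<not> bipartite {1..n} (compl_tau_edges n Gs))"
proof -
  interpret sqfree_deg2 n Gs
    by (rule sqfree_deg2.intro) (fact assms(1))
  have "card Gs \<noteq> 0"
    using assms(2) finite_generators by simp
  then have "card Gs = card T \<Longrightarrow> T \<noteq> {}"
    by auto
  then show ?thesis
    unfolding f_ideal_iff vdegrees_less_iff_covering clique_number_T_eq_2_iff card_T_half_iff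
    using ex_l_type_iff_bipartite by blast
qed

end
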